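(* Every state $\rho\in\mathrm{co}(\mathcal U)$ satisfies $|\rho_{ij}|\le\min\{\rho_{ii},\rho_{jj}\}$ for all pairs of indices $i,j$. Consequently, the only pure states in $\mathrm{co}(\mathcal U)$ are the uniformly coherent ones.
   Context: Fixed computational basis $\{|i\rangle\}_{i=1}^d$. $\mathcal U_k$ is the set of uniformly coherent states $|\Psi\rangle=k^{-1/2}\sum_{j\in J}e^{i\theta_j}|j\rangle$, $|J|=k$, $\theta_j\in\mathbb R$; $\mathcal U=\bigcup_{k=1}^d\mathcal U_k$ (as density matrices), and $\mathrm{co}(\mathcal U)$ its convex hull. A pure state is uniformly coherent if it lies in $\mathcal U$. *)

theory Defs
  imports "HOL-Analysis.Analysis"
begin

text \<open>States on C^d, with the computational basis indexed by a finite type 'n (d = CARD('n)).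
  Density matrices are elements of complex^'n^'n; rho $ i $ j is the (i,j) entry.\<close>

definition ket_bra :: "complex ^'n \<Rightarrow> complex ^'n ^'n" where
  "ket_bra \<psi> = (\<chi> i j. \<psi> $ i * cnj (\<psi> $ j))"

definition unif_vec :: "'n::finite set \<Rightarrow> ('n \<Rightarrow> real) \<Rightarrow> complex ^'n" where
  "unif_vec J \<theta> = (\<chi> j. if j \<in> J then cis (\<theta> j) / complex_of_real (sqrt (real (card J))) else 0)"

definition unif_coherent :: "(complex ^'n::finite ^'n) set" where
  "unif_coherent = {ket_bra (unif_vec J \<theta>) | J \<theta>. J \<noteq> {}}"

definition pure_state :: "complex ^'n::finite ^'n \<Rightarrow> bool" where
  "pure_state \<rho> \<longleftrightarrow> (\<exists>\<phi>::complex^'n. (\<Sum>i\<in>UNIV. (cmod (\<phi> $ i))\<^sup>2) = 1 \<and> \<rho> = ket_bra \<phi>)"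

end

theory Submission
  imports Defs
begin

text \<open>The inequalities |\<rho>_ij| \<le> \<rho>_ii, \<rho>_jj are preserved under convex combinations, and a rank-one
  matrix |\<psi>\<rangle>\<langle>\<psi>| satisfies them exactly when all nonzero amplitudes of \<psi> have the same modulus.
  Uniformly coherent states have this property, so the whole convex hull satisfies the
  inequalities; conversely a normalised \<psi> whose nonzero amplitudes share one modulus c has
  c = 1/sqrt k on its support of size k, i.e. it is uniformly coherent.\<close>

lemma ket_bra_nth: "ket_bra v $ i $ j = v $ i * cnj (v $ j)"
  by (simp add: ket_bra_def)

lemma norm_ket_bra_nth: "cmod (ket_bra v $ i $ j) = cmod (v $ i) * cmod (v $ j)"
  by (simp add: ket_bra_nth norm_mult)

lemma Re_ket_bra_diag: "Re (ket_bra v $ i $ i) = (cmod (v $ i))\<^sup>2"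
  by (simp add: ket_bra_nth flip: complex_norm_square)

definition diag_dominated :: "(complex ^'n ^'n) set" where
  "diag_dominated =
     {\<rho>. \<forall>i j. cmod (\<rho> $ i $ j) \<le> Re (\<rho> $ i $ i) \<and> cmod (\<rho> $ i $ j) \<le> Re (\<rho> $ j $ j)}"

lemma convex_diag_dominated: "convex diag_dominated"
  unfolding convex_def
proof (intro ballI allI impI)
  fix x y :: "complex ^'n ^'n" and u v :: real
  assume x: "x \<in> diag_dominated" and y: "y \<in> diag_dominated"
    and u: "0 \<le> u" and v: "0 \<le> v" and "u + v = 1"
  have "cmod ((u *\<^sub>R x + v *\<^sub>R y) $ i $ j) \<le> Re ((u *\<^sub>R x + v *\<^sub>R y) $ k $ k)"
    if "k = i \<or> k = j" for i j k
  proof -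
    have "cmod ((u *\<^sub>R x + v *\<^sub>R y) $ i $ j) \<le> u * cmod (x $ i $ j) + v * cmod (y $ i $ j)"
      using norm_triangle_ineq[of "u *\<^sub>R x $ i $ j" "v *\<^sub>R y $ i $ j"] u v by simp
    also have "\<dots> \<le> u * Re (x $ k $ k) + v * Re (y $ k $ k)"
      using x y that u v by (intro add_mono mult_left_mono) (auto simp: diag_dominated_def)
    finally show ?thesis by simp
  qed
  then show "u *\<^sub>R x + v *\<^sub>R y \<in> diag_dominated"
    by (simp add: diag_dominated_def)
qed

lemma ket_bra_diag_dominated_iff:
  "ket_bra v \<in> diag_dominated \<longleftrightarrow>
     (\<forall>i j. v $ i \<noteq> 0 \<longrightarrow> v $ j \<noteq> 0 \<longrightarrow> cmod (v $ i) = cmod (v $ j))"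
proof -
  have "cmod (v $ i) * cmod (v $ j) \<le> (cmod (v $ i))\<^sup>2 \<and> cmod (v $ i) * cmod (v $ j) \<le> (cmod (v $ j))\<^sup>2
        \<longleftrightarrow> (v $ i \<noteq> 0 \<longrightarrow> v $ j \<noteq> 0 \<longrightarrow> cmod (v $ i) = cmod (v $ j))" for i j
    by (cases "v $ i = 0"; cases "v $ j = 0") (auto simp: power2_eq_square)
  then show ?thesis
    by (simp add: diag_dominated_def norm_ket_bra_nth Re_ket_bra_diag)
qed

lemma norm_unif_vec_nth:
  "cmod (unif_vec J \<theta> $ i) = (if i \<in> J then 1 / sqrt (real (card J)) else 0)"
  by (simp add: unif_vec_def norm_divide)

lemma unif_vec_nth_outside: "i \<notin> J \<Longrightarrow> unif_vec J \<theta> $ i = 0"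
  by (simp add: unif_vec_def)

lemma unif_coherent_subset_diag_dominated: "unif_coherent \<subseteq> diag_dominated"
proof
  fix \<rho> :: "complex ^'n ^'n"
  assume "\<rho> \<in> unif_coherent"
  then obtain J \<theta> where \<rho>: "\<rho> = ket_bra (unif_vec J \<theta>)"
    by (auto simp: unif_coherent_def)
  have "ket_bra (unif_vec J \<theta>) \<in> diag_dominated"
    unfolding ket_bra_diag_dominated_iff
  proof (intro allI impI)
    fix i j
    assume "unif_vec J \<theta> $ i \<noteq> 0" "unif_vec J \<theta> $ j \<noteq> 0"
    then have "i \<in> J" "j \<in> J"
      using unif_vec_nth_outside by metis+
    then show "cmod (unif_vec J \<theta> $ i) = cmod (unif_vec J \<theta> $ j)"
      by (simp add: norm_unif_vec_nth)
  qed
  then show "\<rho> \<in> diag_dominated"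
    by (simp add: \<rho>)
qed

lemma eq_unif_vecI:
  fixes \<phi> :: "complex ^'n::finite"
  assumes unit: "(\<Sum>i\<in>UNIV. (cmod (\<phi> $ i))\<^sup>2) = 1"
    and flat: "\<And>i j. \<phi> $ i \<noteq> 0 \<Longrightarrow> \<phi> $ j \<noteq> 0 \<Longrightarrow> cmod (\<phi> $ i) = cmod (\<phi> $ j)"
  defines "J \<equiv> {i. \<phi> $ i \<noteq> 0}"
  shows "J \<noteq> {}" and "\<phi> = unif_vec J (\<lambda>j. Arg (\<phi> $ j))"
proof -
  show "J \<noteq> {}"
  proof
    assume "J = {}"
    then show False
      using unit by (simp add: J_def)
  qed
  then obtain i0 where i0: "i0 \<in> J" by blast
  define c where "c = cmod (\<phi> $ i0)"
  have norm_J: "cmod (\<phi> $ i) = c" if "i \<in> J" for i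
    using flat[of i i0] that i0 by (simp add: J_def c_def)
  have "1 = (\<Sum>i\<in>UNIV. (cmod (\<phi> $ i))\<^sup>2)"
    using unit ..
  also have "\<dots> = (\<Sum>i\<in>J. (cmod (\<phi> $ i))\<^sup>2)"
    by (rule sum.mono_neutral_right) (auto simp: J_def)
  also have "\<dots> = real (card J) * c\<^sup>2"
    using norm_J by simp
  finally have "sqrt (real (card J) * c\<^sup>2) = 1"
    by simp
  then have sqrt_c: "sqrt (real (card J)) * c = 1"
    by (simp add: real_sqrt_mult c_def)
  then have "sqrt (real (card J)) \<noteq> 0"
    by auto
  with sqrt_c have c: "c = 1 / sqrt (real (card J))"
    by (simp add: field_simps)
  show "\<phi> = unif_vec J (\<lambda>j. Arg (\<phi> $ j))"
    unfolding vec_eq_iff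
  proof
    fix j
    show "\<phi> $ j = unif_vec J (\<lambda>j. Arg (\<phi> $ j)) $ j"
    proof (cases "j \<in> J")
      case True
      then show ?thesis
        using rcis_cmod_Arg[of "\<phi> $ j"] norm_J[OF True] c
        by (simp add: unif_vec_def rcis_def)
    qed (simp add: unif_vec_def J_def)
  qed
qed

theorem lemma12:
  shows "(\<forall>\<rho> \<in> convex hull (unif_coherent :: (complex ^'n::finite ^'n) set).
            \<forall>i j. cmod (\<rho> $ i $ j) \<le> min (Re (\<rho> $ i $ i)) (Re (\<rho> $ j $ j)))
       \<and> (\<forall>\<rho> :: complex ^'n ^'n. pure_state \<rho> \<and> \<rho> \<in> convex hull unif_coherent
            \<longrightarrow> \<rho> \<in> unif_coherent)"
proof -
  have hull: "convex hull (unif_coherent :: (complex ^'n ^'n) set) \<subseteq> diag_dominated"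
    using unif_coherent_subset_diag_dominated convex_diag_dominated by (rule hull_minimal)
  have "\<rho> \<in> unif_coherent"
    if pure: "pure_state \<rho>" and in_hull: "\<rho> \<in> convex hull unif_coherent" for \<rho> :: "complex ^'n ^'n"
  proof -
    obtain \<phi> where unit: "(\<Sum>i\<in>UNIV. (cmod (\<phi> $ i))\<^sup>2) = 1" and \<rho>: "\<rho> = ket_bra \<phi>"
      using pure unfolding pure_state_def by blast
    have "ket_bra \<phi> \<in> diag_dominated"
      using in_hull hull \<rho> by blast
    then have flat: "\<phi> $ i \<noteq> 0 \<Longrightarrow> \<phi> $ j \<noteq> 0 \<Longrightarrow> cmod (\<phi> $ i) = cmod (\<phi> $ j)" for i j
      unfolding ket_bra_diag_dominated_iff by blast
    obtain J \<theta> where "J \<noteq> {}" and "\<phi> = unif_vec J \<theta>"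
      using eq_unif_vecI[OF unit flat] by (rule that)
    then show ?thesis
      unfolding \<rho> unif_coherent_def by auto
  qed
  moreover have "cmod (\<rho> $ i $ j) \<le> min (Re (\<rho> $ i $ i)) (Re (\<rho> $ j $ j))"
    if "\<rho> \<in> convex hull unif_coherent" for \<rho> :: "complex ^'n ^'n" and i j
  proof -
    have "\<rho> \<in> diag_dominated"
      using that hull by blast
    then show ?thesis
      by (simp add: diag_dominated_def)
  qed
  ultimately show ?thesis
    by auto
qed

end
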